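(* Let $\mathcal A,\mathcal B\subseteq\mathcal M_n(\mathbb C)$ be unital $*$-subalgebras with equivalent spectral lists, and let $S\in\mathcal M_n(\mathbb C)$. Then $$\mathcal U_n(\mathcal E_{\mathcal A}(\mathcal U_n(S)))=\mathcal U_n(\mathcal E_{\mathcal B}(\mathcal U_n(S)))\quad\text{and}\quad \mathcal U_n(\mathcal E_{\mathcal A}(\mathcal C_n(S)))=\mathcal U_n(\mathcal E_{\mathcal B}(\mathcal C_n(S))).$$
   Context: Every unital $*$-subalgebra $\mathcal A\subseteq\mathcal M_n(\mathbb C)$ is unitarily conjugate to one of the form $\bigoplus_{i=1}^m\mathcal M_{d(i)}(\mathbb C)\otimes1_{c(i)}$ with $\sum_i d(i)c(i)=n$ (where $\mathcal M_d(\mathbb C)\otimes 1_c$ is the set of block diagonal matrices with $c$ equal diagonal blocks in $\mathcal M_d(\mathbb C)$); the list $(d(i),c(i))_{i=1}^m$ is its spectral list, determined up to equivalence, where two lists $(d(i),c(i))_{i=1}^m$, $(d'(i),c'(i))_{i=1}^r$ are equivalent if $m=r$ and they differ by a permutation of indices. $\mathcal E_{\mathcal A}$ is the trace preserving conditional expectation onto $\mathcal A$, i.e. the orthogonal projection onto $\mathcal A$ with respect to $\langle X,Y\rangle=\mathrm{tr}(Y^*X)$. For $\mathcal X\subseteq\mathcal M_n(\mathbb C)$: $\mathcal U_n(\mathcal X)=\{U^*XU:X\in\mathcal X,U\text{ unitary}\}$, $\mathcal C_n(S)=\{V^*SV:\|V\|\le1\}$, $\mathcal E_{\mathcal A}(\mathcal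 X)=\{\mathcal E_{\mathcal A}(x):x\in\mathcal X\}$. *)

theory Defs
  imports "Jordan_Normal_Form.Matrix" "HOL-Library.Multiset"
begin

definition adj :: "complex mat \<Rightarrow> complex mat" where
  "adj A = mat (dim_col A) (dim_row A) (\<lambda>(i,j). cnj (A $$ (j,i)))"

definition unitary_mat :: "nat \<Rightarrow> complex mat \<Rightarrow> bool" where
  "unitary_mat n U \<longleftrightarrow> U \<in> carrier_mat n n \<and> adj U * U = 1\<^sub>m n \<and> U * adj U = 1\<^sub>m n"

definition unital_star_subalg :: "nat \<Rightarrow> complex mat set \<Rightarrow> bool" where
  "unital_star_subalg n \<A> \<longleftrightarrow> \<A> \<subseteq> carrier_mat n n \<and> 1\<^sub>m n \<in> \<A> \<and> 0\<^sub>m n n \<in> \<A>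
     \<and> (\<forall>X\<in>\<A>. \<forall>Y\<in>\<A>. X + Y \<in> \<A> \<and> X * Y \<in> \<A>)
     \<and> (\<forall>c. \<forall>X\<in>\<A>. c \<cdot>\<^sub>m X \<in> \<A>)
     \<and> (\<forall>X\<in>\<A>. adj X \<in> \<A>)"

text \<open>The standard algebra  (+)_i M_{d(i)}(C) \<otimes> 1_{c(i)}  for a list of pairs (d(i),c(i)):
  block diagonal matrices where block X_i in M_{d(i)} is repeated c(i) times.\<close>
definition std_alg :: "(nat \<times> nat) list \<Rightarrow> complex mat set" where
  "std_alg L = {diag_block_mat (concat (map (\<lambda>(X,(d,c)). replicate c X) (zip Xs L))) | Xs.
       length Xs = length L \<and> (\<forall>i<length L. Xs ! i \<in> carrier_mat (fst (L ! i)) (fst (L ! i)))}"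

definition spectral_list :: "nat \<Rightarrow> complex mat set \<Rightarrow> (nat \<times> nat) list \<Rightarrow> bool" where
  "spectral_list n \<A> L \<longleftrightarrow> (\<forall>(d,c)\<in>set L. d \<ge> 1 \<and> c \<ge> 1)
     \<and> (\<Sum>(d,c)\<leftarrow>L. d * c) = n
     \<and> (\<exists>U. unitary_mat n U \<and> {adj U * X * U | X. X \<in> \<A>} = std_alg L)"

definition equiv_lists :: "(nat \<times> nat) list \<Rightarrow> (nat \<times> nat) list \<Rightarrow> bool" where
  "equiv_lists L L' \<longleftrightarrow> length L = length L' \<and> mset L = mset L'"

definition mtrace :: "complex mat \<Rightarrow> complex" where
  "mtrace A = (\<Sum>i<dim_row A. A $$ (i,i))"

text \<open>Trace preserving conditional expectation: orthogonal projection onto \<A> w.r.t.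
  <X,Y> = tr(Y^* X).\<close>
definition cond_exp :: "complex mat set \<Rightarrow> complex mat \<Rightarrow> complex mat" where
  "cond_exp \<A> X = (THE Y. Y \<in> \<A> \<and> (\<forall>Z\<in>\<A>. mtrace (adj Z * (X - Y)) = 0))"

definition unitary_orbit :: "nat \<Rightarrow> complex mat set \<Rightarrow> complex mat set" where
  "unitary_orbit n \<X> = {adj U * X * U | X U. X \<in> \<X> \<and> unitary_mat n U}"

definition vnorm2 :: "complex vec \<Rightarrow> real" where
  "vnorm2 x = (\<Sum>i<dim_vec x. (cmod (x $ i))\<^sup>2)"

definition contraction :: "nat \<Rightarrow> complex mat \<Rightarrow> bool" where
  "contraction n V \<longleftrightarrow> V \<in> carrier_mat n n \<and> (\<forall>x\<in>carrier_vec n. vnorm2 (V *\<^sub>v x) \<le> vnorm2 x)"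

definition compressions :: "nat \<Rightarrow> complex mat \<Rightarrow> complex mat set" where
  "compressions n S = {adj V * S * V | V. contraction n V}"

end

theory Submission imports Defs begin

text \<open>Conditional expectations are equivariant under unitary conjugation: if \<open>\<B> = W\<^sup>* \<A> W\<close> then
  \<open>E\<^sub>\<B>(X) = W\<^sup>* E\<^sub>\<A>(W X W\<^sup>*) W\<close>, because conjugation by \<open>W\<close> preserves the trace inner product
  \<open>tr(Z\<^sup>* M)\<close> that characterises \<open>E\<close>. Hence, for unitarily conjugate \<open>\<A>\<close> and \<open>\<B>\<close> and any set \<open>\<X>\<close>
  closed under unitary conjugation, such as \<open>\<U>\<^sub>n(S)\<close> and \<open>\<C>\<^sub>n(S)\<close>, the unitary orbits of
  \<open>E\<^sub>\<A>(\<X>)\<close> and \<open>E\<^sub>\<B>(\<X>)\<close> coincide. It remains to see that equivalent spectral lists give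
  unitarily conjugate standard algebras: the standard algebra of a concatenated list is block diagonal,
  and a permutation matrix exchanging two diagonal blocks conjugates it to the algebra of the
  swapped list, so any permutation of the list can be realised by a unitary.\<close>

section \<open>Orthogonal projection onto a subspace of functions\<close>

definition inner_on :: "'a set \<Rightarrow> ('a \<Rightarrow> complex) \<Rightarrow> ('a \<Rightarrow> complex) \<Rightarrow> complex" where
  "inner_on I f g = (\<Sum>i\<in>I. f i * cnj (g i))"

definition fun_subspace :: "('a \<Rightarrow> complex) set \<Rightarrow> bool" where
  "fun_subspace V \<longleftrightarrow> (\<lambda>i. 0) \<in> V \<and> (\<forall>u\<in>V. \<forall>v\<in>V. (\<lambda>i. u i + v i) \<in> V)
     \<and> (\<forall>c. \<forall>v\<in>V. (\<lambda>i. c * v i) \<in> V)"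

lemma inner_on_diff_left: "inner_on I (\<lambda>i. f i - g i) h = inner_on I f h - inner_on I g h"
  unfolding inner_on_def by (simp add: algebra_simps sum_subtractf)

lemma inner_on_scale_left: "inner_on I (\<lambda>i. c * f i) h = c * inner_on I f h"
  unfolding inner_on_def by (simp add: algebra_simps sum_distrib_left)

lemma inner_on_add_right: "inner_on I f (\<lambda>i. g i + h i) = inner_on I f g + inner_on I f h"
  unfolding inner_on_def by (simp add: algebra_simps sum.distrib)

lemma inner_on_scale_right: "inner_on I f (\<lambda>i. c * g i) = cnj c * inner_on I f g"
  unfolding inner_on_def by (simp add: algebra_simps sum_distrib_left)

lemma inner_on_self: "inner_on I f f = of_real (\<Sum>i\<in>I. (cmod (f i))\<^sup>2)"
  unfolding inner_on_def of_real_sum by (rule sum.cong[OF refl]) (metis complex_norm_square)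

lemma inner_on_insert:
  "finite I \<Longrightarrow> a \<notin> I \<Longrightarrow> inner_on (insert a I) f g = f a * cnj (g a) + inner_on I f g"
  unfolding inner_on_def by simp

lemma inner_on_self_eq_0_iff:
  assumes "finite I" shows "inner_on I f f = 0 \<longleftrightarrow> (\<forall>i\<in>I. f i = 0)"
  using assms unfolding inner_on_self of_real_eq_0_iff by (simp add: sum_nonneg_eq_0_iff)

lemma fun_subspace_add: "fun_subspace V \<Longrightarrow> u \<in> V \<Longrightarrow> v \<in> V \<Longrightarrow> (\<lambda>i. u i + v i) \<in> V"
  and fun_subspace_scale: "fun_subspace V \<Longrightarrow> v \<in> V \<Longrightarrow> (\<lambda>i. c * v i) \<in> V"
  unfolding fun_subspace_def by blast+

lemma fun_subspace_diff:
  assumes "fun_subspace V" "u \<in> V" "v \<in> V" shows "(\<lambda>i. u i - v i) \<in> V"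
proof -
  have "(\<lambda>i. (-1) * v i) \<in> V" using assms unfolding fun_subspace_def by blast
  hence "(\<lambda>i. u i + (-1) * v i) \<in> V" using assms unfolding fun_subspace_def by fast
  thus ?thesis by simp
qed

lemma fun_subspace_vanishing_at:
  "fun_subspace V \<Longrightarrow> fun_subspace {v\<in>V. v a = 0}"
  unfolding fun_subspace_def by auto

lemma orthogonal_projection_extend:
  assumes V: "fun_subspace V" and "V0 \<subseteq> V" and w: "w \<in> V"
    and split: "\<forall>z\<in>V. \<exists>t. (\<lambda>i. z i - t * w i) \<in> V0"
    and w_orth: "\<forall>z\<in>V0. inner_on I w z = 0" and w_nonzero: "inner_on I w w \<noteq> 0"
    and y0: "y0 \<in> V0" "\<forall>z\<in>V0. inner_on I (\<lambda>i. x i - y0 i) z = 0"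
  shows "\<exists>y\<in>V. \<forall>z\<in>V. inner_on I (\<lambda>i. x i - y i) z = 0"
proof
  define c where "c = inner_on I (\<lambda>i. x i - y0 i) w / inner_on I w w"
  define y where "y = (\<lambda>i. y0 i + c * w i)"
  show "y \<in> V" unfolding y_def
    using fun_subspace_add[OF V _ fun_subspace_scale[OF V w]] y0 \<open>V0 \<subseteq> V\<close> by blast
  have residual: "inner_on I (\<lambda>i. x i - y i) z = inner_on I (\<lambda>i. x i - y0 i) z - c * inner_on I w z" for z
    unfolding y_def by (simp add: diff_add_eq_diff_diff_swap inner_on_diff_left inner_on_scale_left)
  show "\<forall>z\<in>V. inner_on I (\<lambda>i. x i - y i) z = 0"
  proof
    fix z assume "z \<in> V"
    then obtain t where z0: "(\<lambda>i. z i - t * w i) \<in> V0" using split by blast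
    have "z = (\<lambda>i. (z i - t * w i) + t * w i)" by simp
    hence "inner_on I (\<lambda>i. x i - y i) z
        = inner_on I (\<lambda>i. x i - y i) (\<lambda>i. z i - t * w i) + cnj t * inner_on I (\<lambda>i. x i - y i) w"
      by (metis inner_on_add_right inner_on_scale_right)
    also have "\<dots> = 0"
      using z0 y0 w_orth w_nonzero unfolding residual c_def by simp
    finally show "inner_on I (\<lambda>i. x i - y i) z = 0" .
  qed
qed

lemma orthogonal_projection_exists:
  assumes "finite I" "fun_subspace V"
  shows "\<exists>y\<in>V. \<forall>z\<in>V. inner_on I (\<lambda>i. x i - y i) z = 0"
  using assms
proof (induction I arbitrary: V x rule: finite_induct)
  case empty
  then show ?case unfolding inner_on_def fun_subspace_def by auto
next
  case (insert a F)
  define V0 where "V0 = {v\<in>V. v a = 0}"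
  have V0: "fun_subspace V0" "V0 \<subseteq> V"
    unfolding V0_def using fun_subspace_vanishing_at[OF insert.prems] by auto
  have restrict: "inner_on (insert a F) f z = inner_on F f z" if "z \<in> V0" for f z
    using that insert.hyps unfolding V0_def by (simp add: inner_on_insert)
  obtain y0 where y0: "y0 \<in> V0" "\<forall>z\<in>V0. inner_on (insert a F) (\<lambda>i. x i - y0 i) z = 0"
    using insert.IH[OF V0(1)] restrict by metis
  show ?case
  proof (cases "V0 = V")
    case True
    with y0 show ?thesis by blast
  next
    case False
    \<comment> \<open>\<open>V0\<close> has codimension one in \<open>V\<close>, and the residual \<open>w'\<close> of any \<open>w \<notin> V0\<close> against \<open>V0\<close>
      spans a complement orthogonal to \<open>V0\<close>.\<close>
    then obtain w where w: "w \<in> V" "w a \<noteq> 0" using V0_def by blast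
    obtain p where p: "p \<in> V0" "\<forall>z\<in>V0. inner_on (insert a F) (\<lambda>i. w i - p i) z = 0"
      using insert.IH[OF V0(1)] restrict by metis
    define w' where "w' = (\<lambda>i. w i - p i)"
    have w'V: "w' \<in> V" unfolding w'_def using fun_subspace_diff[OF insert.prems] w p V0 by blast
    have w'a: "w' a \<noteq> 0" using w p unfolding w'_def V0_def by auto
    have "inner_on (insert a F) w' w' \<noteq> 0"
      using w'a inner_on_self_eq_0_iff[of "insert a F" w'] insert.hyps by auto
    moreover have "\<forall>z\<in>V. \<exists>t. (\<lambda>i. z i - t * w' i) \<in> V0"
    proof
      fix z assume "z \<in> V"
      hence "(\<lambda>i. z i - z a / w' a * w' i) \<in> V"
        using fun_subspace_diff[OF insert.prems _ fun_subspace_scale[OF insert.prems w'V]] by blast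
      thus "\<exists>t. (\<lambda>i. z i - t * w' i) \<in> V0" using w'a unfolding V0_def by (intro exI[of _ "z a / w' a"]) auto
    qed
    ultimately show ?thesis
      using orthogonal_projection_extend[OF insert.prems V0(2) w'V] p(2) y0 unfolding w'_def by blast
  qed
qed

lemma orthogonal_projection_unique:
  assumes "finite I" "fun_subspace V" "y \<in> V" "y' \<in> V"
    and "\<forall>z\<in>V. inner_on I (\<lambda>i. x i - y i) z = 0" "\<forall>z\<in>V. inner_on I (\<lambda>i. x i - y' i) z = 0"
  shows "\<forall>i\<in>I. y i = y' i"
proof -
  define d where "d = (\<lambda>i. y' i - y i)"
  have "d \<in> V" unfolding d_def using fun_subspace_diff assms by blast
  hence "inner_on I (\<lambda>i. x i - y i) d - inner_on I (\<lambda>i. x i - y' i) d = 0" using assms by simp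
  moreover have "(\<lambda>i. (x i - y i) - (x i - y' i)) = d" unfolding d_def by auto
  ultimately have "inner_on I d d = 0" by (metis inner_on_diff_left)
  thus ?thesis using inner_on_self_eq_0_iff[OF assms(1)] unfolding d_def by simp
qed

section \<open>Adjoints, traces and the conditional expectation\<close>

lemma adj_dim [simp]: "dim_row (adj A) = dim_col A" "dim_col (adj A) = dim_row A"
  unfolding adj_def by auto

lemma adj_index [simp]: "i < dim_col A \<Longrightarrow> j < dim_row A \<Longrightarrow> adj A $$ (i, j) = cnj (A $$ (j, i))"
  unfolding adj_def by auto

lemma adj_carrier [simp]: "A \<in> carrier_mat m k \<Longrightarrow> adj A \<in> carrier_mat k m"
  unfolding carrier_mat_def by auto

lemma adj_adj [simp]: "adj (adj A) = A"
  by (rule eq_matI) auto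

lemma adj_one [simp]: "adj (1\<^sub>m n) = 1\<^sub>m n"
  by (rule eq_matI) auto

lemma adj_zero [simp]: "adj (0\<^sub>m m k) = 0\<^sub>m k m"
  by (rule eq_matI) auto

lemma adj_mult:
  assumes "A \<in> carrier_mat m k" "B \<in> carrier_mat k l"
  shows "adj (A * B) = adj B * adj A"
  by (rule eq_matI) (use assms in \<open>auto simp: scalar_prod_def cnj_sum mult.commute intro!: sum.cong\<close>)

lemma adj_four_block_mat:
  assumes "A \<in> carrier_mat a b" "B \<in> carrier_mat a d" "C \<in> carrier_mat c b" "D \<in> carrier_mat c d"
  shows "adj (four_block_mat A B C D) = four_block_mat (adj A) (adj C) (adj B) (adj D)"
  by (rule eq_matI) (use assms in auto)

lemma mtrace_mult_comm:
  assumes "A \<in> carrier_mat m k" "B \<in> carrier_mat k m"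
  shows "mtrace (A * B) = mtrace (B * A)"
proof -
  have "mtrace (A * B) = (\<Sum>i<m. \<Sum>t<k. A $$ (i, t) * B $$ (t, i))"
    using assms unfolding mtrace_def by (auto simp: scalar_prod_def atLeast0LessThan intro!: sum.cong)
  also have "\<dots> = (\<Sum>t<k. \<Sum>i<m. B $$ (t, i) * A $$ (i, t))"
    by (subst sum.swap) (simp add: mult.commute)
  also have "\<dots> = mtrace (B * A)"
    using assms unfolding mtrace_def by (auto simp: scalar_prod_def atLeast0LessThan intro!: sum.cong)
  finally show ?thesis .
qed

text \<open>The entries of an \<open>n \<times> n\<close> matrix as a function on \<open>{..<n} \<times> {..<n}\<close>, extended by zero
  so that matrix addition and scaling become pointwise operations everywhere.\<close>
definition mat_entries :: "nat \<Rightarrow> complex mat \<Rightarrow> nat \<times> nat \<Rightarrow> complex" where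
  "mat_entries n M = (\<lambda>(i, j). if i < n \<and> j < n then M $$ (i, j) else 0)"

lemma mat_entries_add:
  "M \<in> carrier_mat n n \<Longrightarrow> N \<in> carrier_mat n n \<Longrightarrow> mat_entries n (M + N) = (\<lambda>i. mat_entries n M i + mat_entries n N i)"
  and mat_entries_diff:
  "M \<in> carrier_mat n n \<Longrightarrow> N \<in> carrier_mat n n \<Longrightarrow> mat_entries n (M - N) = (\<lambda>i. mat_entries n M i - mat_entries n N i)"
  and mat_entries_smult:
  "M \<in> carrier_mat n n \<Longrightarrow> mat_entries n (c \<cdot>\<^sub>m M) = (\<lambda>i. c * mat_entries n M i)"
  and mat_entries_zero: "mat_entries n (0\<^sub>m n n) = (\<lambda>i. 0)"
  unfolding mat_entries_def by auto

lemma mat_entries_eqI: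
  assumes "M \<in> carrier_mat n n" "N \<in> carrier_mat n n"
    and "\<forall>i\<in>{..<n} \<times> {..<n}. mat_entries n M i = mat_entries n N i"
  shows "M = N"
  by (rule eq_matI) (use assms in \<open>auto simp: mat_entries_def\<close>)

lemma mtrace_adj_mult:
  assumes "M \<in> carrier_mat n n" "Z \<in> carrier_mat n n"
  shows "mtrace (adj Z * M) = inner_on ({..<n} \<times> {..<n}) (mat_entries n M) (mat_entries n Z)"
proof -
  have "mtrace (adj Z * M) = (\<Sum>i<n. \<Sum>k<n. M $$ (k, i) * cnj (Z $$ (k, i)))"
    using assms unfolding mtrace_def
    by (auto simp: scalar_prod_def atLeast0LessThan mult.commute intro!: sum.cong)
  also have "\<dots> = (\<Sum>k<n. \<Sum>i<n. M $$ (k, i) * cnj (Z $$ (k, i)))"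
    by (rule sum.swap)
  also have "\<dots> = inner_on ({..<n} \<times> {..<n}) (mat_entries n M) (mat_entries n Z)"
    unfolding inner_on_def mat_entries_def by (auto simp: sum.cartesian_product intro!: sum.cong)
  finally show ?thesis .
qed

lemma unital_star_subalg_carrier: "unital_star_subalg n A \<Longrightarrow> A \<subseteq> carrier_mat n n"
  unfolding unital_star_subalg_def by blast

lemma fun_subspace_mat_entries:
  assumes A: "unital_star_subalg n A" shows "fun_subspace (mat_entries n ` A)"
proof -
  have Ac: "A \<subseteq> carrier_mat n n" using unital_star_subalg_carrier[OF A] .
  have "mat_entries n (0\<^sub>m n n) \<in> mat_entries n ` A"
    using A unfolding unital_star_subalg_def by blast
  moreover have "mat_entries n (M + N) \<in> mat_entries n ` A" "mat_entries n (c \<cdot>\<^sub>m M) \<in> mat_entries n ` A"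
    if "M \<in> A" "N \<in> A" for M N c
    using A that unfolding unital_star_subalg_def by blast+
  ultimately show ?thesis
    unfolding fun_subspace_def using Ac
    by (auto simp: mat_entries_zero subset_iff mat_entries_add mat_entries_smult)
qed

text \<open>\<open>cond_exp\<close> is defined by \<open>THE\<close>; the projection theorem, transported through \<open>mat_entries\<close>,
  supplies the existence and uniqueness that make it meaningful.\<close>
lemma cond_exp_iff:
  assumes A: "unital_star_subalg n A" and X: "X \<in> carrier_mat n n"
  shows "cond_exp A X = Y \<longleftrightarrow> Y \<in> A \<and> (\<forall>Z\<in>A. mtrace (adj Z * (X - Y)) = 0)"
proof -
  define I where "I = {..<n} \<times> {..<n}"
  define orth where "orth Y \<longleftrightarrow> Y \<in> A \<and> (\<forall>Z\<in>A. mtrace (adj Z * (X - Y)) = 0)" for Y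
  have Ac: "A \<subseteq> carrier_mat n n" using unital_star_subalg_carrier[OF A] .
  have V: "fun_subspace (mat_entries n ` A)" using fun_subspace_mat_entries[OF A] .
  have trace_inner: "mtrace (adj Z * (X - Y)) = inner_on I (\<lambda>i. mat_entries n X i - mat_entries n Y i) (mat_entries n Z)"
    if "Y \<in> A" "Z \<in> A" for Y Z
  proof -
    have "Y \<in> carrier_mat n n" "Z \<in> carrier_mat n n" using that Ac by auto
    thus ?thesis unfolding I_def
      using X mtrace_adj_mult[of "X - Y" n Z] mat_entries_diff[of X n Y] by (simp add: minus_carrier_mat)
  qed
  have orth_iff: "orth Y \<longleftrightarrow> Y \<in> A \<and> (\<forall>z\<in>mat_entries n ` A.
      inner_on I (\<lambda>i. mat_entries n X i - mat_entries n Y i) z = 0)" for Y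
    unfolding orth_def by (simp add: trace_inner cong: conj_cong)
  have I: "finite I" unfolding I_def by simp
  obtain Y0 where "Y0 \<in> A" "\<forall>z\<in>mat_entries n ` A. inner_on I (\<lambda>i. mat_entries n X i - mat_entries n Y0 i) z = 0"
    using orthogonal_projection_exists[OF I V, of "mat_entries n X"] by blast
  hence "orth Y0" unfolding orth_iff by blast
  moreover have "Y' = Y" if "orth Y'" "orth Y" for Y Y'
  proof (rule mat_entries_eqI)
    show "Y' \<in> carrier_mat n n" "Y \<in> carrier_mat n n" using that Ac unfolding orth_def by auto
    show "\<forall>i\<in>{..<n} \<times> {..<n}. mat_entries n Y' i = mat_entries n Y i"
      using that orthogonal_projection_unique[OF I V] unfolding orth_iff I_def by blast
  qed
  ultimately have "\<exists>!Y. orth Y" by blast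
  moreover have "cond_exp A X = (THE Y. orth Y)" unfolding cond_exp_def orth_def ..
  ultimately have "cond_exp A X = Y \<longleftrightarrow> orth Y" using the1_equality theI' by metis
  thus ?thesis unfolding orth_def .
qed

lemma cond_exp_carrier:
  "unital_star_subalg n A \<Longrightarrow> X \<in> carrier_mat n n \<Longrightarrow> cond_exp A X \<in> carrier_mat n n"
  using cond_exp_iff unital_star_subalg_carrier by blast

section \<open>Unitary conjugation\<close>

lemma square_mat_mult_closed [simp]:
  "A \<in> carrier_mat n n \<Longrightarrow> B \<in> carrier_mat n n \<Longrightarrow> A * B \<in> carrier_mat n n"
  and square_mat_diff_closed [simp]:
  "A \<in> carrier_mat n n \<Longrightarrow> B \<in> carrier_mat n n \<Longrightarrow> A - B \<in> carrier_mat n n"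
  by (auto simp: minus_carrier_mat)

lemma unitary_mat_carrier: "unitary_mat n W \<Longrightarrow> W \<in> carrier_mat n n"
  unfolding unitary_mat_def by blast

lemma unitary_mat_adj: "unitary_mat n W \<Longrightarrow> unitary_mat n (adj W)"
  unfolding unitary_mat_def by auto

lemma unitary_cancel_left:
  assumes "unitary_mat n W" "Q \<in> carrier_mat n k"
  shows "W * (adj W * Q) = Q" "adj W * (W * Q) = Q"
  using assms by (simp_all add: unitary_mat_def assoc_mult_mat[of _ n n _ n _ k, symmetric])

lemma unitary_cancel_right:
  assumes "unitary_mat n W" "Q \<in> carrier_mat k n"
  shows "Q * W * adj W = Q" "Q * adj W * W = Q"
  using assms by (simp_all add: unitary_mat_def assoc_mult_mat[of _ k n _ n _ n])

lemma unitary_mat_mult: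
  assumes V: "unitary_mat n V" and W: "unitary_mat n W" shows "unitary_mat n (V * W)"
proof -
  have Vc: "V \<in> carrier_mat n n" and Wc: "W \<in> carrier_mat n n"
    using V W unitary_mat_carrier by auto
  have adj: "adj (V * W) = adj W * adj V" using adj_mult[OF Vc Wc] .
  have "adj W * adj V * (V * W) = adj W * (adj V * (V * W))"
    using Vc Wc by (simp add: assoc_mult_mat[of _ n n _ n _ n])
  also have "\<dots> = 1\<^sub>m n" using unitary_cancel_left(2)[OF V Wc] W unfolding unitary_mat_def by simp
  finally have "adj (V * W) * (V * W) = 1\<^sub>m n" unfolding adj .
  moreover have "V * W * (adj W * adj V) = V * (W * (adj W * adj V))"
    using Vc Wc by (simp add: assoc_mult_mat[of _ n n _ n _ n])
  hence "V * W * adj (V * W) = 1\<^sub>m n"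
    unfolding adj using unitary_cancel_left(1)[OF W, of "adj V" n] V Vc unfolding unitary_mat_def by simp
  ultimately show ?thesis using Vc Wc unfolding unitary_mat_def by simp
qed

lemma conj_conj:
  assumes "V \<in> carrier_mat n n" "W \<in> carrier_mat n n" "X \<in> carrier_mat n n"
  shows "adj W * (adj V * X * V) * W = adj (V * W) * X * (V * W)"
  using assms by (simp add: adj_mult[of _ n n _ n] assoc_mult_mat[of _ n n _ n _ n])

lemma conj_cancel:
  assumes "unitary_mat n W" "X \<in> carrier_mat n n"
  shows "adj W * (W * X * adj W) * W = X"
proof -
  have Wc: "W \<in> carrier_mat n n" using assms unitary_mat_carrier by blast
  have "adj W * (W * X * adj W) * W = adj W * (W * (X * adj W * W))"
    using Wc assms by (simp add: assoc_mult_mat[of _ n n _ n _ n])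
  thus ?thesis using unitary_cancel_left(2)[OF assms(1)] unitary_cancel_right(2)[OF assms] assms by simp
qed

lemma conj_diff:
  assumes "W \<in> carrier_mat n n" "A \<in> carrier_mat n n" "B \<in> carrier_mat n n"
  shows "adj W * A * W - adj W * B * W = adj W * (A - B) * W"
  using assms
  by (simp add: mult_minus_distrib_mat[of _ n n] minus_mult_distrib_mat[of _ n n] minus_carrier_mat)

lemma mtrace_adj_mult_conj:
  assumes W: "unitary_mat n W" and Z: "Z \<in> carrier_mat n n" and M: "M \<in> carrier_mat n n"
  shows "mtrace (adj (adj W * Z * W) * (adj W * M * W)) = mtrace (adj Z * M)"
proof -
  have Wc: "W \<in> carrier_mat n n" using W unitary_mat_carrier by blast
  have "adj (adj W * Z * W) * (adj W * M * W) = adj W * adj Z * (W * (adj W * (M * W)))"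
    using Wc Z M by (simp add: adj_mult[of _ n n _ n] assoc_mult_mat[of _ n n _ n _ n])
  also have "\<dots> = adj W * ((adj Z * M) * W)"
    using Wc Z M unitary_cancel_left(1)[OF W, of "M * W" n] by (simp add: assoc_mult_mat[of _ n n _ n _ n])
  finally have "mtrace (adj (adj W * Z * W) * (adj W * M * W)) = mtrace ((adj Z * M) * W * adj W)"
    using Wc Z M mtrace_mult_comm[of "adj W" n n "adj Z * M * W"]
    by (simp add: assoc_mult_mat[of _ n n _ n _ n])
  thus ?thesis using unitary_cancel_right(1)[OF W, of "adj Z * M" n] Z M by simp
qed

lemma cond_exp_unitary_conj:
  assumes A: "unital_star_subalg n A" and B: "unital_star_subalg n B" and W: "unitary_mat n W"
    and BA: "B = (\<lambda>Z. adj W * Z * W) ` A" and X: "X \<in> carrier_mat n n"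
  shows "cond_exp B X = adj W * cond_exp A (W * X * adj W) * W"
proof -
  have Wc: "W \<in> carrier_mat n n" using W unitary_mat_carrier by blast
  have Ac: "A \<subseteq> carrier_mat n n" using unital_star_subalg_carrier[OF A] .
  define X' where "X' = W * X * adj W"
  have X': "X' \<in> carrier_mat n n" unfolding X'_def using Wc X by simp
  define Y where "Y = cond_exp A X'"
  have Y: "Y \<in> A" "\<forall>Z\<in>A. mtrace (adj Z * (X' - Y)) = 0"
    using cond_exp_iff[OF A X'] unfolding Y_def by auto
  have Yc: "Y \<in> carrier_mat n n" using Y Ac by blast
  have residual: "X - adj W * Y * W = adj W * (X' - Y) * W"
    using conj_diff[OF Wc X' Yc] conj_cancel[OF W X] unfolding X'_def by simp
  have "mtrace (adj (adj W * Z * W) * (X - adj W * Y * W)) = 0" if "Z \<in> A" for Z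
  proof -
    have "Z \<in> carrier_mat n n" using that Ac by blast
    thus ?thesis unfolding residual using that Y X' Yc mtrace_adj_mult_conj[OF W] by simp
  qed
  hence "\<forall>Z'\<in>B. mtrace (adj Z' * (X - adj W * Y * W)) = 0" unfolding BA by blast
  moreover have "adj W * Y * W \<in> B" unfolding BA using Y(1) by blast
  ultimately have "cond_exp B X = adj W * Y * W" using cond_exp_iff[OF B X] by simp
  thus ?thesis unfolding Y_def X'_def .
qed

definition unitarily_equiv :: "nat \<Rightarrow> complex mat set \<Rightarrow> complex mat set \<Rightarrow> bool" where
  "unitarily_equiv n A B \<longleftrightarrow> (\<exists>W. unitary_mat n W \<and> B = (\<lambda>Z. adj W * Z * W) ` A)"

lemma unitarily_equiv_refl:
  assumes "A \<subseteq> carrier_mat n n" shows "unitarily_equiv n A A"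
proof -
  have "unitary_mat n (1\<^sub>m n)" unfolding unitary_mat_def by simp
  moreover have "(\<lambda>Z. adj (1\<^sub>m n) * Z * 1\<^sub>m n) ` A = id ` A"
    using assms by (intro image_cong refl) auto
  ultimately show ?thesis unfolding unitarily_equiv_def by (intro exI[of _ "1\<^sub>m n"]) simp
qed

lemma unitarily_equiv_sym:
  assumes "unitarily_equiv n A B" "A \<subseteq> carrier_mat n n" shows "unitarily_equiv n B A"
proof -
  obtain W where W: "unitary_mat n W" and B: "B = (\<lambda>Z. adj W * Z * W) ` A"
    using assms(1) unfolding unitarily_equiv_def by blast
  have "(\<lambda>Z. adj (adj W) * Z * adj W) ` B = id ` A"
    unfolding B image_image using conj_cancel[OF unitary_mat_adj[OF W]] assms(2) by (intro image_cong refl) auto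
  with unitary_mat_adj[OF W] show ?thesis
    unfolding unitarily_equiv_def by (intro exI[of _ "adj W"] conjI) simp_all
qed

lemma unitarily_equiv_trans:
  assumes "unitarily_equiv n A B" "unitarily_equiv n B C" "A \<subseteq> carrier_mat n n"
  shows "unitarily_equiv n A C"
proof -
  obtain V W where V: "unitary_mat n V" "B = (\<lambda>Z. adj V * Z * V) ` A"
    and W: "unitary_mat n W" "C = (\<lambda>Z. adj W * Z * W) ` B"
    using assms(1,2) unfolding unitarily_equiv_def by blast
  have "adj W * (adj V * Z * V) * W = adj (V * W) * Z * (V * W)" if "Z \<in> A" for Z
    using that assms(3) unitary_mat_carrier[OF V(1)] unitary_mat_carrier[OF W(1)] conj_conj by blast
  hence "C = (\<lambda>Z. adj (V * W) * Z * (V * W)) ` A"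
    unfolding V(2) W(2) image_image by (rule image_cong[OF refl])
  with unitary_mat_mult[OF V(1) W(1)] show ?thesis
    unfolding unitarily_equiv_def by (intro exI[of _ "V * W"] conjI)
qed

lemma unitary_orbitI: "X \<in> \<X> \<Longrightarrow> unitary_mat n U \<Longrightarrow> adj U * X * U \<in> unitary_orbit n \<X>"
  unfolding unitary_orbit_def by blast

lemma unitary_orbit_cond_exp_subset:
  assumes A: "unital_star_subalg n A" and B: "unital_star_subalg n B" and AB: "unitarily_equiv n A B"
    and \<X>: "\<X> \<subseteq> carrier_mat n n" "\<And>X W. X \<in> \<X> \<Longrightarrow> unitary_mat n W \<Longrightarrow> adj W * X * W \<in> \<X>"
  shows "unitary_orbit n (cond_exp B ` \<X>) \<subseteq> unitary_orbit n (cond_exp A ` \<X>)"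
proof
  obtain W where W: "unitary_mat n W" and BA: "B = (\<lambda>Z. adj W * Z * W) ` A"
    using AB unfolding unitarily_equiv_def by blast
  have Wc: "W \<in> carrier_mat n n" using unitary_mat_carrier[OF W] .
  fix M assume "M \<in> unitary_orbit n (cond_exp B ` \<X>)"
  then obtain U X where U: "unitary_mat n U" and X: "X \<in> \<X>" and M: "M = adj U * cond_exp B X * U"
    unfolding unitary_orbit_def by blast
  have Uc: "U \<in> carrier_mat n n" using unitary_mat_carrier[OF U] .
  have Xc: "X \<in> carrier_mat n n" using X \<X>(1) by blast
  define X' where "X' = W * X * adj W"
  have "X' \<in> \<X>" using \<X>(2)[OF X unitary_mat_adj[OF W]] unfolding X'_def by simp
  moreover have "M = adj (W * U) * cond_exp A X' * (W * U)"
    unfolding M cond_exp_unitary_conj[OF A B W BA Xc] X'_def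
    using Uc Wc Xc cond_exp_carrier[OF A, of "W * X * adj W"] by (simp add: conj_conj)
  ultimately show "M \<in> unitary_orbit n (cond_exp A ` \<X>)"
    using unitary_orbitI[OF imageI unitary_mat_mult[OF W U]] by simp
qed

lemma unitary_orbit_cond_exp_eq:
  assumes "unital_star_subalg n A" "unital_star_subalg n B" "unitarily_equiv n A B"
    and "\<X> \<subseteq> carrier_mat n n" "\<And>X W. X \<in> \<X> \<Longrightarrow> unitary_mat n W \<Longrightarrow> adj W * X * W \<in> \<X>"
  shows "unitary_orbit n (cond_exp A ` \<X>) = unitary_orbit n (cond_exp B ` \<X>)"
proof
  show "unitary_orbit n (cond_exp B ` \<X>) \<subseteq> unitary_orbit n (cond_exp A ` \<X>)"
    using unitary_orbit_cond_exp_subset[OF assms] .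
  have "unitarily_equiv n B A"
    using unitarily_equiv_sym[OF assms(3) unital_star_subalg_carrier[OF assms(1)]] .
  thus "unitary_orbit n (cond_exp A ` \<X>) \<subseteq> unitary_orbit n (cond_exp B ` \<X>)"
    using unitary_orbit_cond_exp_subset[OF assms(2,1) _ assms(4,5)] by blast
qed

lemma unitary_orbit_carrier: "\<X> \<subseteq> carrier_mat n n \<Longrightarrow> unitary_orbit n \<X> \<subseteq> carrier_mat n n"
  unfolding unitary_orbit_def using unitary_mat_carrier by fastforce

lemma unitary_orbit_conj_closed:
  assumes "\<X> \<subseteq> carrier_mat n n" "X \<in> unitary_orbit n \<X>" "unitary_mat n W"
  shows "adj W * X * W \<in> unitary_orbit n \<X>"
proof -
  obtain Y U where "Y \<in> \<X>" "unitary_mat n U" "X = adj U * Y * U"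
    using assms(2) unfolding unitary_orbit_def by blast
  moreover have "adj W * (adj U * Y * U) * W = adj (U * W) * Y * (U * W)"
    using calculation assms by (auto intro!: conj_conj simp: unitary_mat_carrier)
  ultimately show ?thesis using unitary_orbitI unitary_mat_mult[OF _ assms(3)] by metis
qed

definition col_mat :: "complex vec \<Rightarrow> complex mat" where
  "col_mat x = mat (dim_vec x) 1 (\<lambda>(i, j). x $ i)"

lemma col_mat_carrier: "x \<in> carrier_vec n \<Longrightarrow> col_mat x \<in> carrier_mat n 1"
  unfolding col_mat_def by auto

lemma mult_col_mat:
  assumes "U \<in> carrier_mat n n" "x \<in> carrier_vec n"
  shows "U * col_mat x = col_mat (U *\<^sub>v x)"
  by (rule eq_matI) (use assms in \<open>auto simp: col_mat_def scalar_prod_def\<close>)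

lemma adj_col_mat_mult_self: "(adj (col_mat x) * col_mat x) $$ (0, 0) = of_real (vnorm2 x)"
  unfolding col_mat_def vnorm2_def
  by (auto simp: scalar_prod_def of_real_sum atLeast0LessThan mult.commute intro!: sum.cong)
    (metis complex_norm_square of_real_power)

lemma vnorm2_unitary_mult:
  assumes U: "unitary_mat n U" and x: "x \<in> carrier_vec n"
  shows "vnorm2 (U *\<^sub>v x) = vnorm2 x"
proof -
  have Uc: "U \<in> carrier_mat n n" using unitary_mat_carrier[OF U] .
  have xc: "col_mat x \<in> carrier_mat n 1" using col_mat_carrier[OF x] .
  have "adj (col_mat (U *\<^sub>v x)) * col_mat (U *\<^sub>v x) = adj (col_mat x) * (adj U * (U * col_mat x))"
    unfolding mult_col_mat[OF Uc x, symmetric] using Uc xc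
    by (simp add: adj_mult[of _ n n _ 1] assoc_mult_mat[of _ 1 n _ n _ 1])
  also have "\<dots> = adj (col_mat x) * col_mat x" using unitary_cancel_left(2)[OF U xc] by simp
  finally show ?thesis using adj_col_mat_mult_self of_real_eq_iff by metis
qed

lemma contraction_mult_unitary:
  assumes V: "contraction n V" and W: "unitary_mat n W"
  shows "contraction n (V * W)"
  unfolding contraction_def
proof (intro conjI ballI)
  have Vc: "V \<in> carrier_mat n n" using V unfolding contraction_def by blast
  have Wc: "W \<in> carrier_mat n n" using unitary_mat_carrier[OF W] .
  show "V * W \<in> carrier_mat n n" using Vc Wc by simp
  fix x :: "complex vec" assume x: "x \<in> carrier_vec n"
  have "vnorm2 ((V * W) *\<^sub>v x) = vnorm2 (V *\<^sub>v (W *\<^sub>v x))" using Vc Wc x by simp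
  also have "\<dots> \<le> vnorm2 (W *\<^sub>v x)" using V Wc x unfolding contraction_def by simp
  also have "\<dots> = vnorm2 x" using vnorm2_unitary_mult[OF W x] .
  finally show "vnorm2 ((V * W) *\<^sub>v x) \<le> vnorm2 x" .
qed

lemma compressions_carrier: "S \<in> carrier_mat n n \<Longrightarrow> compressions n S \<subseteq> carrier_mat n n"
  unfolding compressions_def contraction_def by auto

lemma compressions_conj_closed:
  assumes S: "S \<in> carrier_mat n n" and X: "X \<in> compressions n S" and W: "unitary_mat n W"
  shows "adj W * X * W \<in> compressions n S"
proof -
  obtain V where V: "contraction n V" "X = adj V * S * V"
    using X unfolding compressions_def by blast
  have "adj W * X * W = adj (V * W) * S * (V * W)"
    unfolding V(2) using V(1) S unitary_mat_carrier[OF W] by (intro conj_conj) (auto simp: contraction_def)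
  thus ?thesis unfolding compressions_def using contraction_mult_unitary[OF V(1) W] by blast
qed

section \<open>Standard algebras of equivalent spectral lists\<close>

definition block_diag_alg :: "nat \<Rightarrow> nat \<Rightarrow> complex mat set \<Rightarrow> complex mat set \<Rightarrow> complex mat set" where
  "block_diag_alg p q P Q = (\<lambda>(D1, D2). four_block_mat D1 (0\<^sub>m p q) (0\<^sub>m q p) D2) ` (P \<times> Q)"

lemma four_block_diag_conj:
  assumes "W1 \<in> carrier_mat p p" "W2 \<in> carrier_mat q q" "D1 \<in> carrier_mat p p" "D2 \<in> carrier_mat q q"
  shows "adj (four_block_mat W1 (0\<^sub>m p q) (0\<^sub>m q p) W2) * four_block_mat D1 (0\<^sub>m p q) (0\<^sub>m q p) D2
      * four_block_mat W1 (0\<^sub>m p q) (0\<^sub>m q p) W2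
    = four_block_mat (adj W1 * D1 * W1) (0\<^sub>m p q) (0\<^sub>m q p) (adj W2 * D2 * W2)"
  using assms
  by (simp add: adj_four_block_mat[of _ p p _ q _ q] mult_four_block_mat[of _ p p _ q _ q _ _ p _ q])

lemma four_block_diag_unitary:
  assumes W1: "unitary_mat p W1" and W2: "unitary_mat q W2"
  shows "unitary_mat (p + q) (four_block_mat W1 (0\<^sub>m p q) (0\<^sub>m q p) W2)"
proof -
  have "W1 \<in> carrier_mat p p" "W2 \<in> carrier_mat q q"
    using unitary_mat_carrier W1 W2 by auto
  thus ?thesis using W1 W2 unfolding unitary_mat_def
    by (simp add: adj_four_block_mat[of _ p p _ q _ q] mult_four_block_mat[of _ p p _ q _ q _ _ p _ q]
        right_mult_zero_mat[of _ p p] right_mult_zero_mat[of _ q q] left_mult_zero_mat[of _ p p]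
        left_mult_zero_mat[of _ q q])
qed

lemma unitarily_equiv_block_diag_alg:
  assumes PP': "unitarily_equiv p P P'" and QQ': "unitarily_equiv q Q Q'"
    and P: "P \<subseteq> carrier_mat p p" and Q: "Q \<subseteq> carrier_mat q q"
  shows "unitarily_equiv (p + q) (block_diag_alg p q P Q) (block_diag_alg p q P' Q')"
proof -
  obtain W1 W2 where W1: "unitary_mat p W1" "P' = (\<lambda>Z. adj W1 * Z * W1) ` P"
    and W2: "unitary_mat q W2" "Q' = (\<lambda>Z. adj W2 * Z * W2) ` Q"
    using PP' QQ' unfolding unitarily_equiv_def by blast
  define W where "W = four_block_mat W1 (0\<^sub>m p q) (0\<^sub>m q p) W2"
  have "block_diag_alg p q P' Q' = (\<lambda>Z. adj W * Z * W) ` block_diag_alg p q P Q"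
    unfolding block_diag_alg_def W1(2) W2(2) map_prod_surj_on[OF refl refl, symmetric] image_image W_def
    using P Q unitary_mat_carrier[OF W1(1)] unitary_mat_carrier[OF W2(1)]
    by (intro image_cong refl) (auto simp: four_block_diag_conj subset_iff)
  with four_block_diag_unitary[OF W1(1) W2(1)] show ?thesis
    unfolding unitarily_equiv_def W_def by (intro exI conjI)
qed

definition swap_block_mat :: "nat \<Rightarrow> nat \<Rightarrow> complex mat" where
  "swap_block_mat p q = four_block_mat (0\<^sub>m p q) (1\<^sub>m p) (1\<^sub>m q) (0\<^sub>m q p)"

lemma adj_swap_block_mat: "adj (swap_block_mat p q) = swap_block_mat q p"
  unfolding swap_block_mat_def by (simp add: adj_four_block_mat[of _ p q _ p _ q])

lemma swap_block_mat_mult: "swap_block_mat q p * swap_block_mat p q = 1\<^sub>m (p + q)"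
  unfolding swap_block_mat_def by (simp add: mult_four_block_mat[of _ q p _ q _ p _ _ q _ p] add.commute)

lemma swap_block_mat_unitary: "unitary_mat (p + q) (swap_block_mat p q)"
  unfolding unitary_mat_def adj_swap_block_mat
  using swap_block_mat_mult[of p q] swap_block_mat_mult[of q p]
  by (auto simp: swap_block_mat_def add.commute)

lemma swap_block_mat_conj:
  assumes "D1 \<in> carrier_mat p p" "D2 \<in> carrier_mat q q"
  shows "adj (swap_block_mat p q) * four_block_mat D1 (0\<^sub>m p q) (0\<^sub>m q p) D2 * swap_block_mat p q
    = four_block_mat D2 (0\<^sub>m q p) (0\<^sub>m p q) D1"
proof -
  have "swap_block_mat q p * four_block_mat D1 (0\<^sub>m p q) (0\<^sub>m q p) D2 = four_block_mat (0\<^sub>m q p) D2 D1 (0\<^sub>m p q)"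
    unfolding swap_block_mat_def using assms
    by (simp add: mult_four_block_mat[of _ q p _ q _ p _ _ p _ q] carrier_matD)
  moreover have "four_block_mat (0\<^sub>m q p) D2 D1 (0\<^sub>m p q) * swap_block_mat p q = four_block_mat D2 (0\<^sub>m q p) (0\<^sub>m p q) D1"
    unfolding swap_block_mat_def using assms
    by (simp add: mult_four_block_mat[of _ q p _ q _ p _ _ q _ p] carrier_matD)
  ultimately show ?thesis unfolding adj_swap_block_mat by simp
qed

lemma unitarily_equiv_block_diag_alg_swap:
  assumes "P \<subseteq> carrier_mat p p" "Q \<subseteq> carrier_mat q q"
  shows "unitarily_equiv (p + q) (block_diag_alg p q P Q) (block_diag_alg q p Q P)"
proof -
  have "block_diag_alg q p Q P = (\<lambda>Z. adj (swap_block_mat p q) * Z * swap_block_mat p q) ` block_diag_alg p q P Q"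
    unfolding block_diag_alg_def product_swap[of P Q, symmetric] image_image
    using assms by (intro image_cong refl) (auto simp: swap_block_mat_conj subset_iff)
  with swap_block_mat_unitary show ?thesis unfolding unitarily_equiv_def by (intro exI conjI)
qed

definition std_size :: "(nat \<times> nat) list \<Rightarrow> nat" where
  "std_size L = (\<Sum>(d, c)\<leftarrow>L. d * c)"

definition std_alg_elem :: "(nat \<times> nat) list \<Rightarrow> complex mat list \<Rightarrow> complex mat" where
  "std_alg_elem L Xs = diag_block_mat (concat (map (\<lambda>(X, (d, c)). replicate c X) (zip Xs L)))"

lemma std_size_append [simp]: "std_size (L1 @ L2) = std_size L1 + std_size L2"
  unfolding std_size_def by simp

lemma std_size_mset: "mset L = mset L' \<Longrightarrow> std_size L = std_size L'"
  unfolding std_size_def by (metis mset_map sum_mset_sum_list)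

lemma std_alg_eq:
  "std_alg L = {std_alg_elem L Xs | Xs. list_all2 (\<lambda>X (d, c). X \<in> carrier_mat d d) Xs L}"
  unfolding std_alg_def std_alg_elem_def list_all2_conv_all_nth by (auto simp: case_prod_beta)

lemma std_alg_elem_carrier:
  "list_all2 (\<lambda>X (d, c). X \<in> carrier_mat d d) Xs L \<Longrightarrow> std_alg_elem L Xs \<in> carrier_mat (std_size L) (std_size L)"
  unfolding std_alg_elem_def carrier_mat_def dim_diag_block_mat
  by (induction rule: list_all2_induct) (auto simp: std_size_def dim_diag_block_mat sum_list_replicate)

lemma std_alg_carrier: "std_alg L \<subseteq> carrier_mat (std_size L) (std_size L)"
  unfolding std_alg_eq using std_alg_elem_carrier by blast

lemma std_alg_elem_append:
  assumes "list_all2 (\<lambda>X (d, c). X \<in> carrier_mat d d) Xs L1" "list_all2 (\<lambda>X (d, c). X \<in> carrier_mat d d) Ys L2"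
  shows "std_alg_elem (L1 @ L2) (Xs @ Ys) = four_block_mat (std_alg_elem L1 Xs)
    (0\<^sub>m (std_size L1) (std_size L2)) (0\<^sub>m (std_size L2) (std_size L1)) (std_alg_elem L2 Ys)"
  using std_alg_elem_carrier[OF assms(1)] std_alg_elem_carrier[OF assms(2)] list_all2_lengthD[OF assms(1)]
  unfolding std_alg_elem_def by (simp add: diag_block_mat_append Let_def carrier_matD)

lemma std_alg_append:
  "std_alg (L1 @ L2) = block_diag_alg (std_size L1) (std_size L2) (std_alg L1) (std_alg L2)"
proof
  let ?P = "\<lambda>X (d, c). X \<in> carrier_mat d d"
  show "std_alg (L1 @ L2) \<subseteq> block_diag_alg (std_size L1) (std_size L2) (std_alg L1) (std_alg L2)"
  proof
    fix M assume "M \<in> std_alg (L1 @ L2)"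
    then obtain Xs Ys where "list_all2 ?P Xs L1" "list_all2 ?P Ys L2" "M = std_alg_elem (L1 @ L2) (Xs @ Ys)"
      unfolding std_alg_eq list_all2_append2 by blast
    thus "M \<in> block_diag_alg (std_size L1) (std_size L2) (std_alg L1) (std_alg L2)"
      unfolding block_diag_alg_def std_alg_eq
      by (intro image_eqI[of _ _ "(std_alg_elem L1 Xs, std_alg_elem L2 Ys)"]) (auto simp: std_alg_elem_append)
  qed
  show "block_diag_alg (std_size L1) (std_size L2) (std_alg L1) (std_alg L2) \<subseteq> std_alg (L1 @ L2)"
    unfolding block_diag_alg_def std_alg_eq
    by (auto simp: std_alg_elem_append[symmetric] intro: list_all2_appendI)
qed

lemma unitarily_equiv_std_alg_append:
  assumes "unitarily_equiv (std_size L1) (std_alg L1) (std_alg M1)" "std_size M1 = std_size L1"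
    and "unitarily_equiv (std_size L2) (std_alg L2) (std_alg M2)" "std_size M2 = std_size L2"
  shows "unitarily_equiv (std_size (L1 @ L2)) (std_alg (L1 @ L2)) (std_alg (M1 @ M2))"
  using unitarily_equiv_block_diag_alg[OF assms(1,3) std_alg_carrier std_alg_carrier] assms(2,4)
  by (simp add: std_alg_append)

lemma unitarily_equiv_std_alg_swap:
  "unitarily_equiv (std_size (L1 @ L2)) (std_alg (L1 @ L2)) (std_alg (L2 @ L1))"
  using unitarily_equiv_block_diag_alg_swap[OF std_alg_carrier std_alg_carrier]
  by (simp add: std_alg_append)

lemma unitarily_equiv_std_alg_perm:
  "mset L = mset L' \<Longrightarrow> unitarily_equiv (std_size L) (std_alg L) (std_alg L')"
proof (induction L arbitrary: L')
  case Nil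
  then show ?case using unitarily_equiv_refl[OF std_alg_carrier] by simp
next
  case (Cons a L)
  have "a \<in> set L'" using Cons.prems by (metis list.set_intros(1) set_mset_mset)
  then obtain xs ys where L': "L' = xs @ a # ys" by (meson split_list)
  have "mset L = mset (xs @ ys)" using Cons.prems unfolding L' by simp
  hence "unitarily_equiv (std_size ([a] @ L)) (std_alg ([a] @ L)) (std_alg ([a] @ xs @ ys))"
    using unitarily_equiv_std_alg_append[OF unitarily_equiv_refl[OF std_alg_carrier] refl
        Cons.IH std_size_mset[symmetric]] by blast
  moreover have "unitarily_equiv (std_size (([a] @ xs) @ ys)) (std_alg (([a] @ xs) @ ys)) (std_alg ((xs @ [a]) @ ys))"
    by (rule unitarily_equiv_std_alg_append[OF unitarily_equiv_std_alg_swap _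
          unitarily_equiv_refl[OF std_alg_carrier] refl]) (simp add: std_size_def)
  moreover have "std_size (a # xs @ ys) = std_size (a # L)"
    using \<open>mset L = mset (xs @ ys)\<close> by (intro std_size_mset) simp
  ultimately show ?case using unitarily_equiv_trans[OF _ _ std_alg_carrier] unfolding L' by simp
qed

lemma spectral_list_unitarily_equiv:
  assumes "spectral_list n A L" shows "unitarily_equiv n A (std_alg L)"
proof -
  obtain U where "unitary_mat n U" "(\<lambda>X. adj U * X * U) ` A = std_alg L"
    using assms unfolding spectral_list_def Setcompr_eq_image by blast
  thus ?thesis unfolding unitarily_equiv_def by (intro exI conjI) auto
qed

theorem lemma3p7:
  fixes n :: nat and \<A> \<B> :: "complex mat set" and S :: "complex mat"
    and L L' :: "(nat \<times> nat) list"
  assumes "unital_star_subalg n \<A>" and "unital_star_subalg n \<B>"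
    and "spectral_list n \<A> L" and "spectral_list n \<B> L'" and "equiv_lists L L'"
    and "S \<in> carrier_mat n n"
  shows "unitary_orbit n (cond_exp \<A> ` unitary_orbit n {S})
           = unitary_orbit n (cond_exp \<B> ` unitary_orbit n {S})
       \<and> unitary_orbit n (cond_exp \<A> ` compressions n S)
           = unitary_orbit n (cond_exp \<B> ` compressions n S)"
proof -
  have size: "std_size L = n" "std_size L' = n"
    using assms(3,4) unfolding spectral_list_def std_size_def by auto
  have "unitarily_equiv n \<A> (std_alg L)" "unitarily_equiv n \<B> (std_alg L')"
    using spectral_list_unitarily_equiv assms(3,4) by blast+
  moreover have "unitarily_equiv n (std_alg L) (std_alg L')"
    using unitarily_equiv_std_alg_perm assms(5) size unfolding equiv_lists_def by metis
  ultimately have "unitarily_equiv n \<A> \<B>"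
    using unitarily_equiv_trans unitarily_equiv_sym unital_star_subalg_carrier[OF assms(1)]
      unital_star_subalg_carrier[OF assms(2)] std_alg_carrier size by metis
  note orbits_eq = unitary_orbit_cond_exp_eq[OF assms(1,2) this]
  show ?thesis
    using orbits_eq[OF unitary_orbit_carrier unitary_orbit_conj_closed]
      orbits_eq[OF compressions_carrier compressions_conj_closed] assms(6)
    by simp
qed

end
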